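(* Let $A$ be a left brace and let $B=\{a\in A:\ (b+c)a=ba+ca-a \text{ for all } b,c\in A\}$. Then $B=\{a\in A: a^{-1}(b+c)a=a^{-1}ba+a^{-1}ca \text{ for all } b,c\in A\}$, and $B$ is a subbrace of $A$ (a subgroup of both $(A,+)$ and $(A,\cdot)$) which is a two-sided brace.
   Context: A left brace is a set $A$ with two operations $+,\cdot$ such that $(A,+)$ is an abelian group, $(A,\cdot)$ is a group and $a(b+c)+a=ab+ac$ for all $a,b,c$. A two-sided brace is a left brace that additionally satisfies $(b+c)a+a=ba+ca$ for all $a,b,c$. *)

theory Defs
  imports "HOL-Algebra.Group"
begin

text \<open>A left brace is given by two group structures on the same carrier:
  P (the additive group, written with mult field of P) and M (the multiplicative group).\<close>

definition left_brace :: "('a, 'b) monoid_scheme \<Rightarrow> ('a, 'c) monoid_scheme \<Rightarrow> bool" where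
  "left_brace P M \<longleftrightarrow> comm_group P \<and> group M \<and> carrier P = carrier M \<and>
     (\<forall>a\<in>carrier M. \<forall>b\<in>carrier M. \<forall>c\<in>carrier M.
        (a \<otimes>\<^bsub>M\<^esub> (b \<otimes>\<^bsub>P\<^esub> c)) \<otimes>\<^bsub>P\<^esub> a
          = (a \<otimes>\<^bsub>M\<^esub> b) \<otimes>\<^bsub>P\<^esub> (a \<otimes>\<^bsub>M\<^esub> c))"

definition two_sided_brace :: "('a, 'b) monoid_scheme \<Rightarrow> ('a, 'c) monoid_scheme \<Rightarrow> bool" where
  "two_sided_brace P M \<longleftrightarrow> left_brace P M \<and>
     (\<forall>a\<in>carrier M. \<forall>b\<in>carrier M. \<forall>c\<in>carrier M.
        ((b \<otimes>\<^bsub>P\<^esub> c) \<otimes>\<^bsub>M\<^esub> a) \<otimes>\<^bsub>P\<^esub> a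
          = (b \<otimes>\<^bsub>M\<^esub> a) \<otimes>\<^bsub>P\<^esub> (c \<otimes>\<^bsub>M\<^esub> a))"

end

theory Submission
  imports Defs
begin

text \<open>Write \<open>a \<star> b = ab - a - b\<close>. The left brace axiom says exactly that \<open>\<star>\<close> is additive in
  its right argument, and \<open>B\<close> is the set of \<open>a\<close> such that \<open>x \<mapsto> x \<star> a\<close> is additive. Additivity in the
  right argument makes \<open>B\<close> an additive subgroup. Expanding \<open>x(ad) = (xa)d\<close> gives
  \<open>x \<star> ad = x \<star> a + x \<star> d + (x \<star> a) \<star> d\<close> for \<open>d \<in> B\<close>, so \<open>B\<close> is closed under products; taking
  \<open>ad = a\<inverse>a\<close> shows that the injective additive map \<open>y \<mapsto> y + y \<star> a = ya - a\<close> sends \<open>x \<star> a\<inverse>\<close>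
  to \<open>-(x \<star> a)\<close>, so \<open>B\<close> is closed under inverses. The description by conjugation follows by
  applying the injective map \<open>y \<mapsto> ay + a\<close> and the identity \<open>a(u + v) + a = au + av\<close>.\<close>

locale brace = P: comm_group P + M: group M
  for P :: "('a, 'b) monoid_scheme" and M :: "('a, 'c) monoid_scheme" +
  assumes carrier_eq [simp]: "carrier P = carrier M"
    and left_dist: "\<And>a b c. \<lbrakk>a \<in> carrier M; b \<in> carrier M; c \<in> carrier M\<rbrakk> \<Longrightarrow>
        (a \<otimes>\<^bsub>M\<^esub> (b \<otimes>\<^bsub>P\<^esub> c)) \<otimes>\<^bsub>P\<^esub> a = (a \<otimes>\<^bsub>M\<^esub> b) \<otimes>\<^bsub>P\<^esub> (a \<otimes>\<^bsub>M\<^esub> c)"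
begin

abbreviation add (infixl "\<oplus>" 65) where "x \<oplus> y \<equiv> x \<otimes>\<^bsub>P\<^esub> y"
abbreviation mult (infixl "\<cdot>" 70) where "x \<cdot> y \<equiv> x \<otimes>\<^bsub>M\<^esub> y"
abbreviation neg where "neg x \<equiv> inv\<^bsub>P\<^esub> x"

lemmas add_ac = P.m_ac
lemmas add_closed [simp] = P.m_closed[unfolded carrier_eq]
lemmas neg_closed [simp] = P.inv_closed[unfolded carrier_eq]
lemmas zero_closed [simp] = P.one_closed[unfolded carrier_eq]

lemma add_zero_eq_one: "\<one>\<^bsub>P\<^esub> = \<one>\<^bsub>M\<^esub>"
proof -
  have "\<one>\<^bsub>M\<^esub> \<oplus> \<one>\<^bsub>P\<^esub> = \<one>\<^bsub>P\<^esub> \<oplus> \<one>\<^bsub>P\<^esub>"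
    using left_dist[of "\<one>\<^bsub>M\<^esub>" "\<one>\<^bsub>P\<^esub>" "\<one>\<^bsub>P\<^esub>"] by simp
  then show ?thesis by simp
qed

definition star (infixl "\<star>" 70) where "a \<star> b = a \<cdot> b \<oplus> neg (a \<oplus> b)"

lemma star_closed [simp]: "a \<in> carrier M \<Longrightarrow> b \<in> carrier M \<Longrightarrow> a \<star> b \<in> carrier M"
  by (simp add: star_def)

lemma mult_eq_add_star: "a \<in> carrier M \<Longrightarrow> b \<in> carrier M \<Longrightarrow> a \<cdot> b = (a \<oplus> b) \<oplus> a \<star> b"
  by (simp add: star_def P.m_lcomm[of "a \<oplus> b"])

lemma star_eqI:
  assumes "a \<cdot> b = (a \<oplus> b) \<oplus> t" and "a \<in> carrier M" "b \<in> carrier M" "t \<in> carrier M"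
  shows "a \<star> b = t"
  using assms by (simp add: mult_eq_add_star)

lemma star_add_right:
  assumes "a \<in> carrier M" "b \<in> carrier M" "c \<in> carrier M"
  shows "a \<star> (b \<oplus> c) = a \<star> b \<oplus> a \<star> c"
proof -
  have "a \<cdot> (b \<oplus> c) \<oplus> a = a \<cdot> b \<oplus> a \<cdot> c"
    using assms by (rule left_dist)
  also have "\<dots> = (a \<oplus> (b \<oplus> c) \<oplus> (a \<star> b \<oplus> a \<star> c)) \<oplus> a"
    using assms by (simp add: mult_eq_add_star add_ac)
  finally show ?thesis
    using assms by (simp add: star_eqI)
qed

lemma star_one_right [simp]: "a \<in> carrier M \<Longrightarrow> a \<star> \<one>\<^bsub>M\<^esub> = \<one>\<^bsub>P\<^esub>"
  by (rule star_eqI) (simp_all flip: add_zero_eq_one)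

lemma star_neg_right:
  assumes "a \<in> carrier M" "b \<in> carrier M"
  shows "a \<star> neg b = neg (a \<star> b)"
proof -
  have "a \<star> neg b \<oplus> a \<star> b = \<one>\<^bsub>P\<^esub>"
    using assms star_add_right[of a "neg b" b] by (simp add: add_zero_eq_one)
  then show ?thesis
    using assms by (simp add: P.inv_equality)
qed

definition right_distributive where
  "right_distributive a \<longleftrightarrow> (\<forall>b \<in> carrier M. \<forall>c \<in> carrier M. (b \<oplus> c) \<star> a = b \<star> a \<oplus> c \<star> a)"

lemma right_distributive_iff:
  assumes a: "a \<in> carrier M"
  shows "right_distributive a \<longleftrightarrow>
    (\<forall>b \<in> carrier M. \<forall>c \<in> carrier M. (b \<oplus> c) \<cdot> a \<oplus> a = b \<cdot> a \<oplus> c \<cdot> a)"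
proof -
  have "(b \<oplus> c) \<star> a = b \<star> a \<oplus> c \<star> a \<longleftrightarrow> (b \<oplus> c) \<cdot> a \<oplus> a = b \<cdot> a \<oplus> c \<cdot> a"
    if "b \<in> carrier M" "c \<in> carrier M" for b c
  proof -
    have "b \<cdot> a \<oplus> c \<cdot> a = ((b \<oplus> c \<oplus> a) \<oplus> (b \<star> a \<oplus> c \<star> a)) \<oplus> a"
      using a that by (simp add: mult_eq_add_star add_ac)
    moreover have "(b \<oplus> c) \<cdot> a \<oplus> a = ((b \<oplus> c \<oplus> a) \<oplus> (b \<oplus> c) \<star> a) \<oplus> a"
      using a that by (simp add: mult_eq_add_star)
    ultimately show ?thesis
      using a that by simp
  qed
  then show ?thesis
    unfolding right_distributive_def by simp
qed

lemma right_distributive_one: "right_distributive \<one>\<^bsub>M\<^esub>"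
  unfolding right_distributive_def by simp

lemma right_distributive_add:
  assumes "a \<in> carrier M" "d \<in> carrier M" "right_distributive a" "right_distributive d"
  shows "right_distributive (a \<oplus> d)"
  using assms unfolding right_distributive_def by (simp add: star_add_right add_ac)

lemma right_distributive_neg:
  assumes "a \<in> carrier M" "right_distributive a"
  shows "right_distributive (neg a)"
  using assms unfolding right_distributive_def by (simp add: star_neg_right P.inv_mult)

lemma star_mult_right:
  assumes x: "x \<in> carrier M" and a: "a \<in> carrier M" and d: "d \<in> carrier M"
    and rd: "right_distributive d"
  shows "x \<star> (a \<cdot> d) = x \<star> a \<oplus> x \<star> d \<oplus> (x \<star> a) \<star> d"
proof (rule star_eqI)
  have xa: "x \<cdot> a = x \<oplus> a \<oplus> x \<star> a"
    using x a by (rule mult_eq_add_star)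
  have "x \<cdot> (a \<cdot> d) = (x \<cdot> a) \<cdot> d"
    using x a d by (simp add: M.m_assoc)
  also have "\<dots> = (x \<cdot> a \<oplus> d) \<oplus> (x \<cdot> a) \<star> d"
    using x a d by (simp add: mult_eq_add_star)
  also have "\<dots> = (x \<oplus> a \<oplus> x \<star> a \<oplus> d) \<oplus> (x \<star> d \<oplus> a \<star> d \<oplus> (x \<star> a) \<star> d)"
    using rd x a d unfolding xa right_distributive_def by simp
  also have "\<dots> = (x \<oplus> a \<cdot> d) \<oplus> (x \<star> a \<oplus> x \<star> d \<oplus> (x \<star> a) \<star> d)"
    using x a d by (simp add: mult_eq_add_star[of a d] add_ac)
  finally show "x \<cdot> (a \<cdot> d) = (x \<oplus> a \<cdot> d) \<oplus> (x \<star> a \<oplus> x \<star> d \<oplus> (x \<star> a) \<star> d)" .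
qed (use assms in simp_all)

lemma right_distributive_mult:
  assumes "a \<in> carrier M" "d \<in> carrier M" "right_distributive a" "right_distributive d"
  shows "right_distributive (a \<cdot> d)"
  unfolding right_distributive_def
proof (intro ballI)
  fix b c assume "b \<in> carrier M" "c \<in> carrier M"
  with assms show "(b \<oplus> c) \<star> (a \<cdot> d) = b \<star> (a \<cdot> d) \<oplus> c \<star> (a \<cdot> d)"
    by (simp add: star_mult_right right_distributive_def add_ac)
qed

lemma star_inv_right:
  assumes x: "x \<in> carrier M" and a: "a \<in> carrier M" and ra: "right_distributive a"
  shows "x \<star> inv\<^bsub>M\<^esub> a \<oplus> (x \<star> inv\<^bsub>M\<^esub> a) \<star> a = neg (x \<star> a)"
proof -
  have "\<one>\<^bsub>P\<^esub> = x \<star> (inv\<^bsub>M\<^esub> a \<cdot> a)"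
    using x a by simp
  also have "\<dots> = x \<star> inv\<^bsub>M\<^esub> a \<oplus> x \<star> a \<oplus> (x \<star> inv\<^bsub>M\<^esub> a) \<star> a"
    by (rule star_mult_right) (use x a ra in simp_all)
  also have "\<dots> = (x \<star> inv\<^bsub>M\<^esub> a \<oplus> (x \<star> inv\<^bsub>M\<^esub> a) \<star> a) \<oplus> x \<star> a"
    using x a by (simp add: add_ac)
  finally have "(x \<star> inv\<^bsub>M\<^esub> a \<oplus> (x \<star> inv\<^bsub>M\<^esub> a) \<star> a) \<oplus> x \<star> a = \<one>\<^bsub>P\<^esub>"
    by (rule sym)
  then show ?thesis
    using x a by (simp add: P.inv_equality)
qed

lemma add_star_right_inj:
  assumes "a \<in> carrier M" "y \<in> carrier M" "z \<in> carrier M"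
    and "y \<oplus> y \<star> a = z \<oplus> z \<star> a"
  shows "y = z"
proof -
  have "y \<cdot> a = (y \<oplus> y \<star> a) \<oplus> a" "z \<cdot> a = (z \<oplus> z \<star> a) \<oplus> a"
    using assms by (simp_all add: mult_eq_add_star add_ac)
  then have "y \<cdot> a = z \<cdot> a"
    using assms(4) by simp
  then show ?thesis
    using assms(1-3) by simp
qed

lemma right_distributive_inv:
  assumes a: "a \<in> carrier M" and ra: "right_distributive a"
  shows "right_distributive (inv\<^bsub>M\<^esub> a)"
  unfolding right_distributive_def
proof (intro ballI)
  fix b c assume b: "b \<in> carrier M" and c: "c \<in> carrier M"
  let ?i = "inv\<^bsub>M\<^esub> a"
  have dist: "(y \<oplus> z) \<star> a = y \<star> a \<oplus> z \<star> a" if "y \<in> carrier M" "z \<in> carrier M" for y z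
    using ra that unfolding right_distributive_def by blast
  have "(b \<star> ?i \<oplus> c \<star> ?i) \<oplus> (b \<star> ?i \<oplus> c \<star> ?i) \<star> a
      = (b \<star> ?i \<oplus> (b \<star> ?i) \<star> a) \<oplus> (c \<star> ?i \<oplus> (c \<star> ?i) \<star> a)"
    using a b c by (simp add: dist add_ac)
  also have "\<dots> = neg (b \<star> a) \<oplus> neg (c \<star> a)"
    using a b c ra by (simp only: star_inv_right)
  also have "\<dots> = neg ((b \<oplus> c) \<star> a)"
    using a b c by (simp add: dist P.inv_mult)
  also have "\<dots> = (b \<oplus> c) \<star> ?i \<oplus> ((b \<oplus> c) \<star> ?i) \<star> a"
    using a b c ra by (simp add: star_inv_right)
  finally have eq: "b \<star> ?i \<oplus> c \<star> ?i \<oplus> (b \<star> ?i \<oplus> c \<star> ?i) \<star> a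
      = (b \<oplus> c) \<star> ?i \<oplus> ((b \<oplus> c) \<star> ?i) \<star> a" .
  have "b \<star> ?i \<oplus> c \<star> ?i = (b \<oplus> c) \<star> ?i"
    by (rule add_star_right_inj[OF a _ _ eq]) (use a b c in simp_all)
  then show "(b \<oplus> c) \<star> ?i = b \<star> ?i \<oplus> c \<star> ?i" ..
qed

lemma subgroup_right_distributive_add:
  "subgroup {a \<in> carrier M. right_distributive a} P"
proof (rule P.subgroupI)
  show "{a \<in> carrier M. right_distributive a} \<noteq> {}"
    using right_distributive_one by blast
qed (auto intro: right_distributive_add right_distributive_neg)

lemma subgroup_right_distributive_mult:
  "subgroup {a \<in> carrier M. right_distributive a} M"
proof (rule M.subgroupI)
  show "{a \<in> carrier M. right_distributive a} \<noteq> {}"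
    using right_distributive_one by blast
qed (auto intro: right_distributive_mult right_distributive_inv)

lemma conjugate_add_iff:
  assumes a: "a \<in> carrier M" and b: "b \<in> carrier M" and c: "c \<in> carrier M"
  shows "inv\<^bsub>M\<^esub> a \<cdot> (b \<oplus> c) \<cdot> a = (inv\<^bsub>M\<^esub> a \<cdot> b \<cdot> a) \<oplus> (inv\<^bsub>M\<^esub> a \<cdot> c \<cdot> a)
    \<longleftrightarrow> (b \<oplus> c) \<cdot> a \<oplus> a = b \<cdot> a \<oplus> c \<cdot> a"
proof -
  let ?i = "inv\<^bsub>M\<^esub> a"
  have conj: "a \<cdot> (?i \<cdot> x \<cdot> a) = x \<cdot> a" if "x \<in> carrier M" for x
    using a that by (simp add: M.m_assoc flip: M.m_assoc[of a ?i])
  have sum: "a \<cdot> (?i \<cdot> b \<cdot> a \<oplus> ?i \<cdot> c \<cdot> a) \<oplus> a = b \<cdot> a \<oplus> c \<cdot> a"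
    using a b c by (simp add: left_dist conj)
  have "inv\<^bsub>M\<^esub> a \<cdot> (b \<oplus> c) \<cdot> a = (inv\<^bsub>M\<^esub> a \<cdot> b \<cdot> a) \<oplus> (inv\<^bsub>M\<^esub> a \<cdot> c \<cdot> a)
    \<longleftrightarrow> a \<cdot> (?i \<cdot> (b \<oplus> c) \<cdot> a) \<oplus> a = a \<cdot> (?i \<cdot> b \<cdot> a \<oplus> ?i \<cdot> c \<cdot> a) \<oplus> a"
    using a b c by simp
  also have "\<dots> \<longleftrightarrow> (b \<oplus> c) \<cdot> a \<oplus> a = b \<cdot> a \<oplus> c \<cdot> a"
    using b c by (simp only: sum conj add_closed)
  finally show ?thesis .
qed

lemma left_brace_subbrace:
  assumes "subgroup B P" "subgroup B M"
  shows "left_brace (P\<lparr>carrier := B\<rparr>) (M\<lparr>carrier := B\<rparr>)"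
  unfolding left_brace_def
proof (intro conjI ballI)
  show "comm_group (P\<lparr>carrier := B\<rparr>)"
  proof (rule group.group_comm_groupI)
    show "group (P\<lparr>carrier := B\<rparr>)"
      using assms(1) by (rule P.subgroup_imp_group)
  qed (use subgroup.mem_carrier[OF assms(1)] in \<open>simp add: P.m_comm\<close>)
  show "group (M\<lparr>carrier := B\<rparr>)"
    using assms(2) by (rule M.subgroup_imp_group)
  fix a b c assume "a \<in> carrier (M\<lparr>carrier := B\<rparr>)" "b \<in> carrier (M\<lparr>carrier := B\<rparr>)"
    "c \<in> carrier (M\<lparr>carrier := B\<rparr>)"
  then have "a \<in> carrier M" "b \<in> carrier M" "c \<in> carrier M"
    using subgroup.mem_carrier[OF assms(2)] by auto
  then show "(a \<otimes>\<^bsub>M\<lparr>carrier := B\<rparr>\<^esub> (b \<otimes>\<^bsub>P\<lparr>carrier := B\<rparr>\<^esub> c)) \<otimes>\<^bsub>P\<lparr>carrier := B\<rparr>\<^esub> a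
      = (a \<otimes>\<^bsub>M\<lparr>carrier := B\<rparr>\<^esub> b) \<otimes>\<^bsub>P\<lparr>carrier := B\<rparr>\<^esub> (a \<otimes>\<^bsub>M\<lparr>carrier := B\<rparr>\<^esub> c)"
    by (simp add: left_dist)
qed simp

lemma two_sided_brace_subbrace:
  assumes "subgroup B P" "subgroup B M" "\<And>a. a \<in> B \<Longrightarrow> right_distributive a"
  shows "two_sided_brace (P\<lparr>carrier := B\<rparr>) (M\<lparr>carrier := B\<rparr>)"
  unfolding two_sided_brace_def
proof (intro conjI ballI)
  show "left_brace (P\<lparr>carrier := B\<rparr>) (M\<lparr>carrier := B\<rparr>)"
    using assms(1,2) by (rule left_brace_subbrace)
  fix a b c assume "a \<in> carrier (M\<lparr>carrier := B\<rparr>)" "b \<in> carrier (M\<lparr>carrier := B\<rparr>)"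
    "c \<in> carrier (M\<lparr>carrier := B\<rparr>)"
  then have "a \<in> B" "b \<in> carrier M" "c \<in> carrier M"
    using assms(2) subgroup.mem_carrier by auto
  then show "(b \<otimes>\<^bsub>P\<lparr>carrier := B\<rparr>\<^esub> c) \<otimes>\<^bsub>M\<lparr>carrier := B\<rparr>\<^esub> a \<otimes>\<^bsub>P\<lparr>carrier := B\<rparr>\<^esub> a
      = (b \<otimes>\<^bsub>M\<lparr>carrier := B\<rparr>\<^esub> a) \<otimes>\<^bsub>P\<lparr>carrier := B\<rparr>\<^esub> (c \<otimes>\<^bsub>M\<lparr>carrier := B\<rparr>\<^esub> a)"
    using assms(2,3) right_distributive_iff subgroup.mem_carrier by fastforce
qed

end

lemma left_brace_imp_brace: "left_brace P M \<Longrightarrow> brace P M"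
  unfolding left_brace_def
  by (intro brace.intro brace_axioms.intro) (auto simp: comm_group.axioms group.axioms)

theorem mainTheorem11:
  fixes P :: "('a, 'b) monoid_scheme" and M :: "('a, 'c) monoid_scheme"
  assumes "left_brace P M"
  defines "B \<equiv> {a \<in> carrier M. \<forall>b\<in>carrier M. \<forall>c\<in>carrier M.
              (b \<otimes>\<^bsub>P\<^esub> c) \<otimes>\<^bsub>M\<^esub> a
                = ((b \<otimes>\<^bsub>M\<^esub> a) \<otimes>\<^bsub>P\<^esub> (c \<otimes>\<^bsub>M\<^esub> a)) \<otimes>\<^bsub>P\<^esub> inv\<^bsub>P\<^esub> a}"
  shows "(B = {a \<in> carrier M. \<forall>b\<in>carrier M. \<forall>c\<in>carrier M.
              inv\<^bsub>M\<^esub> a \<otimes>\<^bsub>M\<^esub> (b \<otimes>\<^bsub>P\<^esub> c) \<otimes>\<^bsub>M\<^esub> a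
                = (inv\<^bsub>M\<^esub> a \<otimes>\<^bsub>M\<^esub> b \<otimes>\<^bsub>M\<^esub> a)
                  \<otimes>\<^bsub>P\<^esub> (inv\<^bsub>M\<^esub> a \<otimes>\<^bsub>M\<^esub> c \<otimes>\<^bsub>M\<^esub> a)})
      \<and> subgroup B P \<and> subgroup B M
      \<and> two_sided_brace (P\<lparr>carrier := B\<rparr>) (M\<lparr>carrier := B\<rparr>)"
proof -
  interpret brace P M
    using assms(1) by (rule left_brace_imp_brace)
  have B_right_distributive: "B = {a \<in> carrier M. right_distributive a}"
    unfolding B_def by (auto simp: right_distributive_iff P.inv_solve_right)
  have B_conjugate: "B = {a \<in> carrier M. \<forall>b\<in>carrier M. \<forall>c\<in>carrier M.
      inv\<^bsub>M\<^esub> a \<cdot> (b \<oplus> c) \<cdot> a = (inv\<^bsub>M\<^esub> a \<cdot> b \<cdot> a) \<oplus> (inv\<^bsub>M\<^esub> a \<cdot> c \<cdot> a)}"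
    unfolding B_right_distributive by (auto simp: right_distributive_iff conjugate_add_iff)
  show ?thesis
    unfolding B_conjugate[symmetric] B_right_distributive
    using subgroup_right_distributive_add subgroup_right_distributive_mult
    by (auto intro: two_sided_brace_subbrace)
qed

end
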